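(* Let $A=\{a_1,\dots,a_k\}$ be finite and $u_1,u_2:A\to\mathbb{R}$. Consider the following perfect-information game: (1) player 1 proposes $\alpha\in\mathbb{R}$; (2) player 2, observing $\alpha$, decides whether to be the chooser (player 1 then being the proposer) or the proposer (player 1 then being the chooser); (3) the proposer chooses a price vector $p\in P_\alpha=\{p\in\mathbb{R}^k:\sum_j p_j=\alpha\}$; (4) the chooser, observing $p$, selects an option $a_j\in A$ and pays $p_j$ to the proposer. Payoffs are quasi-linear: $u_i(a_j)+t_i$ where $t_i$ is the net transfer received. Then in every (pure) subgame-perfect Nash equilibrium, $\alpha=\frac{k}{2}\bigl(\mathrm{Avg}_1+\mathrm{Avg}_2-\max(u)\bigr)$, the selected option is efficient, and the equilibrium payoffs of players 1 and 2 are $\frac12\max(u)-\frac12(\mathrm{Avg}_2-\mathrm{Avg}_1)$ and $\frac12\max(u)+\frac12(\mathrm{Avg}_2-\mathrm{Avg}_1)$ respectively.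
   Context: $\mathrm{Avg}_i=\frac1k\sum_j u_i(a_j)$, $\max(u)=\max_{a\in A}(u_1(a)+u_2(a))$; an option is efficient if it attains $\max(u)$. Subgame-perfect Nash equilibrium: a profile of pure strategies (player 1: $\alpha$, and, depending on roles, price choices as functions of the history and option choices as functions of the history) such that in every subgame the continuation strategies are mutually best responses. *)

theory Defs
  imports Complex_Main
begin

text \<open>Options A = {a_0, ..., a_(k-1)} are represented by their indices j < k;
  utilities u1, u2 :: nat => real (only values on indices below k matter).
  Price vectors in R^k are functions nat => real (only the first k coordinates matter).\<close>

definition Avg :: "nat \<Rightarrow> (nat \<Rightarrow> real) \<Rightarrow> real" where
  "Avg k u = (1 / real k) * (\<Sum>j<k. u j)"

definition maxu :: "nat \<Rightarrow> (nat \<Rightarrow> real) \<Rightarrow> (nat \<Rightarrow> real) \<Rightarrow> real" where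
  "maxu k u1 u2 = Max ((\<lambda>j. u1 j + u2 j) ` {..<k})"

definition efficient :: "nat \<Rightarrow> (nat \<Rightarrow> real) \<Rightarrow> (nat \<Rightarrow> real) \<Rightarrow> nat \<Rightarrow> bool" where
  "efficient k u1 u2 j \<longleftrightarrow> j < k \<and> u1 j + u2 j = maxu k u1 u2"

definition Pset :: "nat \<Rightarrow> real \<Rightarrow> (nat \<Rightarrow> real) set" where
  "Pset k a = {p. (\<Sum>j<k. p j) = a}"

text \<open>A pure strategy profile.
  alpha: player 1's proposal.
  role a: player 2's decision after observing a; True = player 2 is the chooser
     (player 1 proposer), False = player 2 is the proposer (player 1 chooser).
  price1 a: player 1's price vector at history (a, True) (player 1 proposer).
  price2 a: player 2's price vector at history (a, False) (player 2 proposer).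
  choice1 a p: player 1's option at history (a, False, p) (player 1 chooser).
  choice2 a p: player 2's option at history (a, True, p) (player 2 chooser).\<close>
record profile =
  alpha :: real
  role :: "real \<Rightarrow> bool"
  price1 :: "real \<Rightarrow> nat \<Rightarrow> real"
  price2 :: "real \<Rightarrow> nat \<Rightarrow> real"
  choice1 :: "real \<Rightarrow> (nat \<Rightarrow> real) \<Rightarrow> nat"
  choice2 :: "real \<Rightarrow> (nat \<Rightarrow> real) \<Rightarrow> nat"

definition legal :: "nat \<Rightarrow> profile \<Rightarrow> bool" where
  "legal k s \<longleftrightarrow>
     (\<forall>a. price1 s a \<in> Pset k a \<and> price2 s a \<in> Pset k a) \<and>
     (\<forall>a. \<forall>p\<in>Pset k a. choice1 s a p < k \<and> choice2 s a p < k)"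

datatype hist = Root | H1 real | H2 real bool | H3 real bool "nat \<Rightarrow> real"

definition valid_hist :: "nat \<Rightarrow> hist \<Rightarrow> bool" where
  "valid_hist k h = (case h of H3 a b p \<Rightarrow> p \<in> Pset k a | _ \<Rightarrow> True)"

definition chosen :: "profile \<Rightarrow> real \<Rightarrow> bool \<Rightarrow> (nat \<Rightarrow> real) \<Rightarrow> nat" where
  "chosen s a b p = (if b then choice2 s a p else choice1 s a p)"

definition proposed :: "profile \<Rightarrow> real \<Rightarrow> bool \<Rightarrow> nat \<Rightarrow> real" where
  "proposed s a b = (if b then price1 s a else price2 s a)"

definition terminal :: "profile \<Rightarrow> hist \<Rightarrow> real \<times> bool \<times> (nat \<Rightarrow> real) \<times> nat" where
  "terminal s h = (case h of
      H3 a b p \<Rightarrow> (a, b, p, chosen s a b p)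
    | H2 a b \<Rightarrow> (a, b, proposed s a b, chosen s a b (proposed s a b))
    | H1 a \<Rightarrow> (let b = role s a in (a, b, proposed s a b, chosen s a b (proposed s a b)))
    | Root \<Rightarrow> (let a = alpha s; b = role s a in
                (a, b, proposed s a b, chosen s a b (proposed s a b))))"

definition payoff1 :: "(nat \<Rightarrow> real) \<Rightarrow> real \<times> bool \<times> (nat \<Rightarrow> real) \<times> nat \<Rightarrow> real" where
  "payoff1 u1 t = (case t of (a, b, p, j) \<Rightarrow> u1 j + (if b then p j else - p j))"

definition payoff2 :: "(nat \<Rightarrow> real) \<Rightarrow> real \<times> bool \<times> (nat \<Rightarrow> real) \<times> nat \<Rightarrow> real" where
  "payoff2 u2 t = (case t of (a, b, p, j) \<Rightarrow> u2 j + (if b then - p j else p j))"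

definition dev1 :: "profile \<Rightarrow> profile \<Rightarrow> bool" where
  "dev1 s t \<longleftrightarrow> role t = role s \<and> price2 t = price2 s \<and> choice2 t = choice2 s"

definition dev2 :: "profile \<Rightarrow> profile \<Rightarrow> bool" where
  "dev2 s t \<longleftrightarrow> alpha t = alpha s \<and> price1 t = price1 s \<and> choice1 t = choice1 s"

definition SPNE :: "nat \<Rightarrow> (nat \<Rightarrow> real) \<Rightarrow> (nat \<Rightarrow> real) \<Rightarrow> profile \<Rightarrow> bool" where
  "SPNE k u1 u2 s \<longleftrightarrow> legal k s \<and>
     (\<forall>h. valid_hist k h \<longrightarrow>
        (\<forall>t. legal k t \<and> dev1 s t \<longrightarrow> payoff1 u1 (terminal t h) \<le> payoff1 u1 (terminal s h)) \<and>
        (\<forall>t. legal k t \<and> dev2 s t \<longrightarrow> payoff2 u2 (terminal t h) \<le> payoff2 u2 (terminal s h)))"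

end

theory Submission
  imports Defs
begin

text \<open>When the proposer offers prices summing to \<open>\<alpha>\<close>, a rational chooser
  can secure the average net utility \<open>Avg - \<alpha>/k\<close>: some option beats the average of
  \<open>u j - p j\<close>. The proposer can push the chooser down to that value, up to any \<open>\<epsilon> > 0\<close>,
  on an efficient option. So in equilibrium the chooser gets exactly \<open>Avg - \<alpha>/k\<close>, the proposer
  the remainder of \<open>max(u)\<close>. Player 2 therefore picks the better of two affine functions of
  \<open>\<alpha>\<close> with opposite slopes. Player 1, who receives \<open>max(u)\<close> minus that, must propose the
  \<open>\<alpha>\<close> where the two lines cross.\<close>

lemma maxu_ge: "i < k \<Longrightarrow> u1 i + u2 i \<le> maxu k u1 u2"
  unfolding maxu_def by (rule Max_ge) auto

lemma maxu_attained:
  assumes "k \<ge> 1"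
  obtains j where "j < k" "u1 j + u2 j = maxu k u1 u2"
proof -
  have "(\<lambda>j. u1 j + u2 j) ` {..<k} \<noteq> {}" using assms by (auto simp: lessThan_empty_iff)
  from Max_in[OF _ this] that show thesis unfolding maxu_def by force
qed

lemma maxu_commute: "maxu k u2 u1 = maxu k u1 u2"
  unfolding maxu_def by (simp add: add.commute)

lemma payoff1_add_payoff2: "payoff1 u1 (a, b, p, j) + payoff2 u2 (a, b, p, j) = u1 j + u2 j"
  unfolding payoff1_def payoff2_def by simp

definition chooser_optimal :: "nat \<Rightarrow> (nat \<Rightarrow> real) \<Rightarrow> real \<Rightarrow> ((nat \<Rightarrow> real) \<Rightarrow> nat) \<Rightarrow> bool" where
  "chooser_optimal k u a ch \<longleftrightarrow>
     (\<forall>p\<in>Pset k a. ch p < k \<and> (\<forall>i<k. u i - p i \<le> u (ch p) - p (ch p)))"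

lemma Avg_sub_le_net_utility:
  assumes "k \<ge> 1" "p \<in> Pset k a" "\<And>i. i < k \<Longrightarrow> u i - p i \<le> v"
  shows "Avg k u - a / k \<le> v"
proof -
  have "(\<Sum>i<k. u i) - a = (\<Sum>i<k. u i - p i)"
    using assms(2) unfolding Pset_def by (simp add: sum_subtractf)
  also have "\<dots> \<le> k * v"
    using sum_mono[of "{..<k}" "\<lambda>i. u i - p i" "\<lambda>_. v"] assms(3) by simp
  finally show ?thesis
    using assms(1) unfolding Avg_def by (simp add: field_simps)
qed

text \<open>Prices leaving the chooser \<open>d - \<delta>\<close> on every option but \<open>j\<close> and \<open>d\<close> on \<open>j\<close>,
  where \<open>k d - (k - 1) \<delta> = \<Sum> u - a\<close>.\<close>

lemma price_vector_forcing:
  assumes "j < k" "\<delta> > 0"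
  obtains p where "p \<in> Pset k a" "\<And>i. i < k \<Longrightarrow> i \<noteq> j \<Longrightarrow> u i - p i < u j - p j"
    "u j - p j \<le> Avg k u - a / k + \<delta>"
proof -
  have k: "real k > 0" using assms(1) by simp
  define d where "d = ((\<Sum>i<k. u i) - a + (real k - 1) * \<delta>) / k"
  define p where "p = (\<lambda>i. u i - d + \<delta> - (if i = j then \<delta> else 0))"
  have "(\<Sum>i<k. p i) = (\<Sum>i<k. u i) - k * d + k * \<delta> - \<delta>"
    unfolding p_def using assms(1) by (simp add: sum_subtractf sum.distrib)
  also have "\<dots> = a" unfolding d_def using k by (simp add: field_simps)
  finally have "p \<in> Pset k a" unfolding Pset_def by simp
  moreover have "u i - p i < u j - p j" if "i \<noteq> j" for i
    using that assms(2) unfolding p_def by simp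
  moreover have "u j - p j \<le> Avg k u - a / k + \<delta>"
  proof -
    have "u j - p j = Avg k u - a / k + (real k - 1) * \<delta> / k"
      unfolding p_def d_def Avg_def using k by (simp add: field_simps)
    moreover have "(real k - 1) * \<delta> / k \<le> \<delta>" using k assms(2) by (simp add: field_simps)
    ultimately show ?thesis by simp
  qed
  ultimately show thesis using that by blast
qed

lemma proposer_chooser_subgame:
  assumes k: "k \<ge> 1" and q: "q \<in> Pset k a" and ch: "chooser_optimal k uC a ch"
    and proposer: "\<And>p. p \<in> Pset k a \<Longrightarrow> uP (ch p) + p (ch p) \<le> uP (ch q) + q (ch q)"
  shows "uC (ch q) - q (ch q) = Avg k uC - a / k"
    and "uP (ch q) + uC (ch q) = maxu k uP uC"
proof -
  let ?c = "Avg k uC - a / k" and ?M = "maxu k uP uC" and ?j = "ch q"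
  have j: "?j < k" and j_best: "\<And>i. i < k \<Longrightarrow> uC i - q i \<le> uC ?j - q ?j"
    using ch q unfolding chooser_optimal_def by auto
  have chooser_ge: "?c \<le> uC ?j - q ?j" by (rule Avg_sub_le_net_utility[OF k q j_best])
  obtain e where e: "e < k" "uP e + uC e = ?M" using maxu_attained[OF k] by blast
  have proposer_ge: "?M - ?c \<le> uP ?j + q ?j + \<delta>" if \<delta>: "\<delta> > 0" for \<delta>
  proof -
    obtain p where p: "p \<in> Pset k a"
      and forced: "\<And>i. i < k \<Longrightarrow> i \<noteq> e \<Longrightarrow> uC i - p i < uC e - p e" and "uC e - p e \<le> ?c + \<delta>"
      using price_vector_forcing[OF e(1) \<delta>] by blast
    moreover have "ch p = e"
    proof -
      have "ch p < k" "uC e - p e \<le> uC (ch p) - p (ch p)"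
        using ch p e(1) unfolding chooser_optimal_def by auto
      then show ?thesis using forced[of "ch p"] by force
    qed
    ultimately show ?thesis using proposer[OF p] e(2) by simp
  qed
  have "?M - ?c \<le> uP ?j + q ?j" by (rule field_le_epsilon) (rule proposer_ge)
  with chooser_ge maxu_ge[OF j, of uP uC]
  show "uC ?j - q ?j = ?c" and "uP ?j + uC ?j = ?M" by linarith+
qed

lemma terminal_H2: "terminal s (H2 a b) = (a, b, proposed s a b, chosen s a b (proposed s a b))"
  unfolding terminal_def by simp

lemma terminal_H1: "terminal s (H1 a) = terminal s (H2 a (role s a))"
  unfolding terminal_def Let_def by simp

lemma terminal_Root: "terminal s Root = terminal s (H1 (alpha s))"
  unfolding terminal_def Let_def by simp

lemma SPNE_dev1:
  "SPNE k u1 u2 s \<Longrightarrow> legal k t \<Longrightarrow> dev1 s t \<Longrightarrow> valid_hist k h \<Longrightarrow>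
     payoff1 u1 (terminal t h) \<le> payoff1 u1 (terminal s h)"
  unfolding SPNE_def by blast

lemma SPNE_dev2:
  "SPNE k u1 u2 s \<Longrightarrow> legal k t \<Longrightarrow> dev2 s t \<Longrightarrow> valid_hist k h \<Longrightarrow>
     payoff2 u2 (terminal t h) \<le> payoff2 u2 (terminal s h)"
  unfolding SPNE_def by blast

lemma SPNE_legal: "SPNE k u1 u2 s \<Longrightarrow> legal k s"
  unfolding SPNE_def by blast

lemma SPNE_chooser_optimal:
  assumes "SPNE k u1 u2 s"
  shows "chooser_optimal k u2 a (choice2 s a)" and "chooser_optimal k u1 a (choice1 s a)"
proof -
  have lg: "legal k s" using SPNE_legal[OF assms] .
  have "u2 i - p i \<le> u2 (choice2 s a p) - p (choice2 s a p)"
    if "p \<in> Pset k a" "i < k" for p i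
  proof -
    let ?t = "s\<lparr>choice2 := (choice2 s)(a := (choice2 s a)(p := i))\<rparr>"
    have "legal k ?t" using lg that unfolding legal_def by auto
    from SPNE_dev2[OF assms this _, of "H3 a True p"] that
    show ?thesis by (simp add: dev2_def valid_hist_def terminal_def chosen_def payoff2_def)
  qed
  then show "chooser_optimal k u2 a (choice2 s a)"
    using lg unfolding chooser_optimal_def legal_def by blast
  have "u1 i - p i \<le> u1 (choice1 s a p) - p (choice1 s a p)"
    if "p \<in> Pset k a" "i < k" for p i
  proof -
    let ?t = "s\<lparr>choice1 := (choice1 s)(a := (choice1 s a)(p := i))\<rparr>"
    have "legal k ?t" using lg that unfolding legal_def by auto
    from SPNE_dev1[OF assms this _, of "H3 a False p"] that
    show ?thesis by (simp add: dev1_def valid_hist_def terminal_def chosen_def payoff1_def)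
  qed
  then show "chooser_optimal k u1 a (choice1 s a)"
    using lg unfolding chooser_optimal_def legal_def by blast
qed

lemma SPNE_proposer_optimal:
  assumes "SPNE k u1 u2 s" "p \<in> Pset k a"
  shows "u1 (choice2 s a p) + p (choice2 s a p)
           \<le> u1 (choice2 s a (price1 s a)) + price1 s a (choice2 s a (price1 s a))"
    and "u2 (choice1 s a p) + p (choice1 s a p)
           \<le> u2 (choice1 s a (price2 s a)) + price2 s a (choice1 s a (price2 s a))"
proof -
  have lg: "legal k s" using SPNE_legal[OF assms(1)] .
  have "legal k (s\<lparr>price1 := (price1 s)(a := p)\<rparr>)" using lg assms(2) unfolding legal_def by auto
  from SPNE_dev1[OF assms(1) this _, of "H2 a True"]
  show "u1 (choice2 s a p) + p (choice2 s a p)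
          \<le> u1 (choice2 s a (price1 s a)) + price1 s a (choice2 s a (price1 s a))"
    by (simp add: dev1_def valid_hist_def terminal_H2 chosen_def proposed_def payoff1_def)
  have "legal k (s\<lparr>price2 := (price2 s)(a := p)\<rparr>)" using lg assms(2) unfolding legal_def by auto
  from SPNE_dev2[OF assms(1) this _, of "H2 a False"]
  show "u2 (choice1 s a p) + p (choice1 s a p)
          \<le> u2 (choice1 s a (price2 s a)) + price2 s a (choice1 s a (price2 s a))"
    by (simp add: dev2_def valid_hist_def terminal_H2 chosen_def proposed_def payoff2_def)
qed

lemma SPNE_price_subgame:
  assumes sp: "SPNE k u1 u2 s" and k: "k \<ge> 1"
  shows "payoff2 u2 (terminal s (H2 a b))
           = (if b then Avg k u2 - a / k else maxu k u1 u2 - Avg k u1 + a / k)"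
    and "payoff1 u1 (terminal s (H2 a b)) + payoff2 u2 (terminal s (H2 a b)) = maxu k u1 u2"
    and "efficient k u1 u2 (snd (snd (snd (terminal s (H2 a b)))))"
proof -
  have lg: "legal k s" using SPNE_legal[OF sp] .
  have price1: "price1 s a \<in> Pset k a" and price2: "price2 s a \<in> Pset k a"
    using lg unfolding legal_def by auto
  have chosen_lt: "chosen s a b (proposed s a b) < k"
    using lg price1 price2 unfolding legal_def chosen_def proposed_def by auto
  note player2_chooses = proposer_chooser_subgame[OF k price1 SPNE_chooser_optimal(1)[OF sp]
      SPNE_proposer_optimal(1)[OF sp]]
  note player1_chooses = proposer_chooser_subgame[OF k price2 SPNE_chooser_optimal(2)[OF sp]
      SPNE_proposer_optimal(2)[OF sp]]
  have eff: "u1 (chosen s a b (proposed s a b)) + u2 (chosen s a b (proposed s a b)) = maxu k u1 u2"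
    using player1_chooses(2) player2_chooses(2) maxu_commute[of k u1 u2]
    by (cases b) (simp_all add: chosen_def proposed_def add.commute)
  show "payoff2 u2 (terminal s (H2 a b))
          = (if b then Avg k u2 - a / k else maxu k u1 u2 - Avg k u1 + a / k)"
    using player1_chooses player2_chooses maxu_commute[of k u1 u2]
    by (cases b) (simp_all add: terminal_H2 chosen_def proposed_def payoff2_def algebra_simps)
  show "payoff1 u1 (terminal s (H2 a b)) + payoff2 u2 (terminal s (H2 a b)) = maxu k u1 u2"
    using eff by (simp add: terminal_H2 payoff1_add_payoff2)
  show "efficient k u1 u2 (snd (snd (snd (terminal s (H2 a b)))))"
    using eff chosen_lt by (simp add: terminal_H2 efficient_def)
qed

lemma SPNE_role_subgame:
  assumes sp: "SPNE k u1 u2 s" and k: "k \<ge> 1"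
  shows "payoff2 u2 (terminal s (H1 a))
           = max (Avg k u2 - a / k) (maxu k u1 u2 - Avg k u1 + a / k)"
    and "payoff1 u1 (terminal s (H1 a)) + payoff2 u2 (terminal s (H1 a)) = maxu k u1 u2"
    and "efficient k u1 u2 (snd (snd (snd (terminal s (H1 a)))))"
proof -
  let ?t = "s\<lparr>role := (role s)(a := \<not> role s a)\<rparr>"
  have "legal k ?t" using SPNE_legal[OF sp] unfolding legal_def by simp
  moreover have "terminal ?t (H1 a) = terminal s (H2 a (\<not> role s a))"
    by (simp add: terminal_H1 terminal_H2 proposed_def chosen_def)
  ultimately have "payoff2 u2 (terminal s (H2 a (\<not> role s a))) \<le> payoff2 u2 (terminal s (H1 a))"
    using SPNE_dev2[OF sp, of ?t "H1 a"] by (simp add: dev2_def valid_hist_def)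
  then show "payoff2 u2 (terminal s (H1 a))
               = max (Avg k u2 - a / k) (maxu k u1 u2 - Avg k u1 + a / k)"
    unfolding terminal_H1 SPNE_price_subgame(1)[OF sp k] by (cases "role s a") auto
  show "payoff1 u1 (terminal s (H1 a)) + payoff2 u2 (terminal s (H1 a)) = maxu k u1 u2"
    and "efficient k u1 u2 (snd (snd (snd (terminal s (H1 a)))))"
    unfolding terminal_H1 using SPNE_price_subgame(2,3)[OF sp k] by blast+
qed

lemma SPNE_alpha_optimal:
  assumes "SPNE k u1 u2 s"
  shows "payoff1 u1 (terminal s (H1 a)) \<le> payoff1 u1 (terminal s (H1 (alpha s)))"
proof -
  have "legal k (s\<lparr>alpha := a\<rparr>)" using SPNE_legal[OF assms] unfolding legal_def by simp
  moreover have "terminal (s\<lparr>alpha := a\<rparr>) Root = terminal s (H1 a)"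
    by (simp add: terminal_Root terminal_H1 terminal_H2 proposed_def chosen_def)
  ultimately show ?thesis
    using SPNE_dev1[OF assms, of "s\<lparr>alpha := a\<rparr>" Root]
    by (simp add: dev1_def valid_hist_def terminal_Root)
qed

lemma max_affine_minimizer:
  fixes c x y :: real
  assumes "c > 0" and "\<And>a'. max (x - a / c) (y + a / c) \<le> max (x - a' / c) (y + a' / c)"
  shows "a = c / 2 * (x - y)"
proof -
  let ?a0 = "c / 2 * (x - y)"
  have "max (x - a / c) (y + a / c) \<le> max (x - ?a0 / c) (y + ?a0 / c)" by (rule assms(2))
  also have "\<dots> = (x + y) / 2" using assms(1) by (simp add: max_def field_simps)
  finally have "x - a / c \<le> (x + y) / 2" "y + a / c \<le> (x + y) / 2"
    by (simp_all only: max.bounded_iff)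
  then have "a / c = (x - y) / 2" by argo
  then show ?thesis using assms(1) by (simp add: field_simps)
qed

theorem mainTheorem5:
  fixes k :: nat and u1 u2 :: "nat \<Rightarrow> real" and s :: profile
  assumes "k \<ge> 1"
    and "SPNE k u1 u2 s"
  shows "alpha s = real k / 2 * (Avg k u1 + Avg k u2 - maxu k u1 u2)
       \<and> efficient k u1 u2 (snd (snd (snd (terminal s Root))))
       \<and> payoff1 u1 (terminal s Root) = maxu k u1 u2 / 2 - (Avg k u2 - Avg k u1) / 2
       \<and> payoff2 u2 (terminal s Root) = maxu k u1 u2 / 2 + (Avg k u2 - Avg k u1) / 2"
proof -
  note role = SPNE_role_subgame[OF assms(2,1)]
  have "max (Avg k u2 - alpha s / k) (maxu k u1 u2 - Avg k u1 + alpha s / k)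
               \<le> max (Avg k u2 - a / k) (maxu k u1 u2 - Avg k u1 + a / k)" for a
    using SPNE_alpha_optimal[OF assms(2), of a] role(2)[of a] role(2)[of "alpha s"]
    unfolding role(1) by linarith
  then have "alpha s = real k / 2 * (Avg k u2 - (maxu k u1 u2 - Avg k u1))"
    by (rule max_affine_minimizer[rotated]) (use assms(1) in simp)
  then have alpha: "alpha s = real k / 2 * (Avg k u1 + Avg k u2 - maxu k u1 u2)"
    by (simp add: algebra_simps)
  then have "alpha s / k = (Avg k u1 + Avg k u2 - maxu k u1 u2) / 2" using assms(1) by simp
  then have payoff2: "payoff2 u2 (terminal s Root) = maxu k u1 u2 / 2 + (Avg k u2 - Avg k u1) / 2"
    unfolding terminal_Root role(1) by (simp add: max_def field_simps)
  moreover have "payoff1 u1 (terminal s Root) = maxu k u1 u2 / 2 - (Avg k u2 - Avg k u1) / 2"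
    using payoff2 role(2)[of "alpha s"] unfolding terminal_Root by linarith
  ultimately show ?thesis
    using alpha role(3)[of "alpha s"] unfolding terminal_Root by blast
qed

end
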